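(* Let $X=[X_1|X_2]$ be a real $n\times p$ matrix with $X_1$ of size $n\times p_1$ and $X_2$ of size $n\times p_2$, where $X_1$ has linearly independent columns ($\mathrm{rank}(X_1)=p_1\le n$). Let $X_2=[X_{2,1}|\cdots|X_{2,B}]$ be split into blocks, let $\lambda_1,\dots,\lambda_B>0$ and let $\Lambda$ be the $p_2\times p_2$ diagonal matrix whose diagonal entries corresponding to the columns of $X_{2,b}$ equal $\lambda_b$. Let $\Lambda'=\begin{pmatrix}\mathbf{0}_{p_1\times p_1}&\mathbf{0}_{p_1\times p_2}\\ \mathbf{0}_{p_2\times p_1}&\Lambda\end{pmatrix}$. Let $W$ be an $n\times n$ diagonal matrix with strictly positive diagonal entries, set $X_{k,W}=W^{1/2}X_k$ for $k=1,2$, $P_{1,W}=I_{n\times n}-X_{1,W}(X_{1,W}^TX_{1,W})^{-1}X_{1,W}^T$, $\Sigma_{2,b}=X_{2,b}X_{2,b}^T$, and $$\Gamma_{W,\Lambda}=W^{1/2}\Bigl(\sum_{b=1}^B\lambda_b^{-1}\Sigma_{2,b}\Bigr)W^{1/2}.$$ Let $H_{W,\Lambda}=X(X^TWX+\Lambda')^{-1}X^T$. Then $$H_{W,\Lambda}=W^{-1/2}X_{1,W}(X_{1,W}^TX_{1,W})^{-1}X_{1,W}^T\bigl(I_{n\times n}-W^{1/2}H_{2,W,\Lambda}W^{1/2}\bigr)W^{-1/2}+H_{2,W,\Lambda},$$ where $$H_{2,W,\Lambda}=W^{-1/2}\,\Gamma_{W,\Lambda}\Bigl(I_{n\times n}-(I_{n\times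 n}+P_{1,W}\Gamma_{W,\Lambda})^{-1}P_{1,W}\Gamma_{W,\Lambda}\Bigr)P_{1,W}\,W^{-1/2}.$$
   Context: $X_1$ contains unpenalized covariates and $X_2$ contains penalized covariates in multi-penalty ridge regression; $H_{W,\Lambda}$ is the sample-weighted hat matrix used in iterative weighted least squares. *)

theory Defs
  imports "HOL-Analysis.Analysis"
begin

definition hcat :: "real^'k^'m \<Rightarrow> real^'l^'m \<Rightarrow> real^('k + 'l)^'m" where
  "hcat A B = (\<chi> i j. case j of Inl a \<Rightarrow> A $ i $ a | Inr b \<Rightarrow> B $ i $ b)"

definition bdiag :: "real^'k^'k \<Rightarrow> real^'l^'l \<Rightarrow> real^('k + 'l)^('k + 'l)" where
  "bdiag A B = (\<chi> i j. case (i, j) of (Inl a, Inl a') \<Rightarrow> A $ a $ a'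
                                | (Inr b, Inr b') \<Rightarrow> B $ b $ b'
                                | _ \<Rightarrow> 0)"

definition diag_mat :: "('n \<Rightarrow> real) \<Rightarrow> real^'n^'n" where
  "diag_mat d = (\<chi> i j. if i = j then d i else 0)"

definition is_diag :: "real^'n^'n \<Rightarrow> bool" where
  "is_diag A \<longleftrightarrow> (\<forall>i j. i \<noteq> j \<longrightarrow> A $ i $ j = 0)"

definition diag_sqrt :: "real^'n^'n \<Rightarrow> real^'n^'n" where
  "diag_sqrt W = diag_mat (\<lambda>i. sqrt (W $ i $ i))"

text \<open>Sigma_{2,b} = X_{2,b} X_{2,b}^T, where X_{2,b} consists of the columns j of X2 with blk j = b.\<close>
definition Sigma_blk :: "real^'p^'n \<Rightarrow> ('p \<Rightarrow> 'b) \<Rightarrow> 'b \<Rightarrow> real^'n^'n" where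
  "Sigma_blk X2 blk b = (\<chi> i k. \<Sum>j\<in>{j. blk j = b}. X2 $ i $ j * X2 $ k $ j)"

definition diag_msqrt :: "real^'n^'n \<Rightarrow> real^'n^'n" where
  "diag_msqrt W = matrix_inv (diag_sqrt W)"

definition P1W :: "real^'p1^'n \<Rightarrow> real^'n^'n \<Rightarrow> real^'n^'n" where
  "P1W X1 W = (let X1W = diag_sqrt W ** X1 in
      mat 1 - X1W ** matrix_inv (transpose X1W ** X1W) ** transpose X1W)"

definition GammaW :: "real^'p2^'n \<Rightarrow> ('p2 \<Rightarrow> 'b::finite) \<Rightarrow> ('b \<Rightarrow> real) \<Rightarrow> real^'n^'n \<Rightarrow> real^'n^'n" where
  "GammaW X2 blk lam W =
     diag_sqrt W ** (\<Sum>b\<in>UNIV. (1 / lam b) *\<^sub>R Sigma_blk X2 blk b) ** diag_sqrt W"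

definition H2W :: "real^'p1^'n \<Rightarrow> real^'p2^'n \<Rightarrow> ('p2 \<Rightarrow> 'b::finite) \<Rightarrow> ('b \<Rightarrow> real) \<Rightarrow> real^'n^'n \<Rightarrow> real^'n^'n" where
  "H2W X1 X2 blk lam W = (let P = P1W X1 W; G = GammaW X2 blk lam W in
     diag_msqrt W ** G ** (mat 1 - matrix_inv (mat 1 + P ** G) ** P ** G) ** P ** diag_msqrt W)"

definition HW :: "real^'p1^'n \<Rightarrow> real^'p2^'n \<Rightarrow> ('p2 \<Rightarrow> 'b::finite) \<Rightarrow> ('b \<Rightarrow> real) \<Rightarrow> real^'n^'n \<Rightarrow> real^'n^'n" where
  "HW X1 X2 blk lam W = (let X = hcat X1 X2; Lam' = bdiag (mat 0) (diag_mat (\<lambda>j. lam (blk j))) in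
     X ** matrix_inv (transpose X ** W ** X + Lam') ** transpose X)"

end

theory Submission
  imports Defs
begin

text \<open>
  Put A = W^(1/2) X1, B = W^(1/2) X2 and X_W = [A|B] = W^(1/2) X. Since X^T W X = X_W^T X_W,
  H_{W,Lambda} = W^(-1/2) X_W M^(-1) X_W^T W^(-1/2) with M = X_W^T X_W + Lambda', so only the
  unweighted hat matrix of X_W has to be computed. With Q = A (A^T A)^(-1) A^T, P = I - Q,
  G = B Lambda^(-1) B^T = Gamma_{W,Lambda} and Y = G (I + P G)^(-1) P, the equation
  M Z = X_W^T is solved in block form by Z1 = (A^T A)^(-1) A^T (I - Y) and
  Z2 = Lambda^(-1) B^T P (I - Y), whence X_W M^(-1) X_W^T = X_W Z = Q (I - Y) + Y.
  The matrices A^T A, M and I + P G are invertible by positivity: A has full column rank,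
  Lambda > 0, G is positive semidefinite and P is an orthogonal projection.
  Finally G (I - (I + P G)^(-1) P G) = G (I + P G)^(-1), so Y = W^(1/2) H_{2,W,Lambda} W^(1/2).
\<close>

lemma matrix_add_rdistrib: "((A::real^'n^'m) + B) ** C = A ** C + B ** C"
  by (simp add: matrix_matrix_mult_def vec_eq_iff sum.distrib algebra_simps)

lemma matrix_diff_rdistrib: "((A::real^'n^'m) - B) ** C = A ** C - B ** C"
  by (simp add: matrix_matrix_mult_def vec_eq_iff sum_subtractf algebra_simps)

lemma matrix_diff_ldistrib: "(A::real^'n^'m) ** (B - C) = A ** B - A ** C"
  by (simp add: matrix_matrix_mult_def vec_eq_iff sum_subtractf algebra_simps)

lemma transpose_diff: "transpose ((A::real^'n^'m) - B) = transpose A - transpose B"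
  by (simp add: transpose_def vec_eq_iff)

lemma inner_transpose: "(transpose (A::real^'n^'m) *v x) \<bullet> y = x \<bullet> (A *v y)"
  by (simp add: dot_lmul_matrix)

lemma matrix_inv_right: "invertible (A::real^'n^'m) \<Longrightarrow> A ** matrix_inv A = mat 1"
  unfolding invertible_def matrix_inv_def by (rule someI2_ex) auto

lemma matrix_inv_left: "invertible (A::real^'n^'m) \<Longrightarrow> matrix_inv A ** A = mat 1"
  unfolding invertible_def matrix_inv_def by (rule someI2_ex) auto

lemma matrix_inv_unique_left:
  assumes "invertible (A::real^'n^'n)" and "B ** A = mat 1"
  shows "matrix_inv A = B"
  by (metis assms matrix_inv_right matrix_mul_assoc matrix_mul_lid matrix_mul_rid)

lemma transpose_matrix_inv:
  assumes "invertible (A::real^'n^'n)"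
  shows "transpose (matrix_inv A) = matrix_inv (transpose A)"
  by (metis assms matrix_inv_right matrix_inv_unique_left matrix_transpose_mul
      transpose_invertible transpose_mat)

lemma inj_matrix_mult_left:
  fixes D :: "real^'n^'n" and X :: "real^'p^'n"
  assumes "invertible D" and "inj ((*v) X)"
  shows "inj ((*v) (D ** X))"
proof (rule injI)
  fix x y assume "(D ** X) *v x = (D ** X) *v y"
  then have "(matrix_inv D ** D ** X) *v x = (matrix_inv D ** D ** X) *v y"
    by (simp flip: matrix_vector_mul_assoc matrix_mul_assoc)
  then have "X *v x = X *v y"
    by (simp add: matrix_inv_left[OF assms(1)])
  then show "x = y"
    using assms(2) by (meson injD)
qed

lemma invertible_if_ker_trivial:
  "(\<And>x. (A::real^'n^'n) *v x = 0 \<Longrightarrow> x = 0) \<Longrightarrow> invertible A"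
  using matrix_left_invertible_ker invertible_left_inverse by metis

lemma invertible_if_pos_def:
  "(\<And>x. x \<noteq> 0 \<Longrightarrow> x \<bullet> ((A::real^'n^'n) *v x) > 0) \<Longrightarrow> invertible A"
  by (rule invertible_if_ker_trivial) (metis inner_zero_right less_irrefl)

lemma inner_Gram: "x \<bullet> ((transpose A ** A) *v x) = (A *v x) \<bullet> (A *v (x::real^'n))"
  by (metis inner_transpose matrix_vector_mul_assoc transpose_transpose)

lemma invertible_Gram:
  assumes "inj ((*v) (A::real^'n^'m))"
  shows "invertible (transpose A ** A)"
proof (rule invertible_if_pos_def)
  fix x :: "real^'n" assume "x \<noteq> 0"
  then have "A *v x \<noteq> 0"
    using assms by (metis injD matrix_vector_mult_0_right)
  then show "x \<bullet> ((transpose A ** A) *v x) > 0" by (simp add: inner_Gram)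
qed

lemma mat_1_minus_inv_mult:
  assumes "invertible (mat 1 + E :: real^'n^'n)"
  shows "mat 1 - matrix_inv (mat 1 + E) ** E = matrix_inv (mat 1 + E)"
proof -
  have "matrix_inv (mat 1 + E) + matrix_inv (mat 1 + E) ** E = mat 1"
    using matrix_inv_left[OF assms] by (simp add: matrix_add_ldistrib)
  then show ?thesis by (simp add: diff_eq_eq)
qed

lemma mat_1_minus_mult_inv:
  assumes "invertible (mat 1 + E :: real^'n^'n)"
  shows "mat 1 - E ** matrix_inv (mat 1 + E) = matrix_inv (mat 1 + E)"
proof -
  have "matrix_inv (mat 1 + E) + E ** matrix_inv (mat 1 + E) = mat 1"
    using matrix_inv_right[OF assms] by (simp add: matrix_add_rdistrib)
  then show ?thesis by (simp add: diff_eq_eq)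
qed

lemma invertible_id_plus_proj_mult_psd:
  fixes P G :: "real^'n^'n"
  assumes "transpose P = P" and "P ** P = P" and G_psd: "\<And>x. x \<bullet> (G *v x) \<ge> 0"
  shows "invertible (mat 1 + P ** G)"
proof (rule invertible_if_ker_trivial)
  fix x assume "(mat 1 + P ** G) *v x = 0"
  then have x: "x = - (P *v (G *v x))"
    by (simp add: matrix_vector_mult_add_rdistrib matrix_vector_mul_assoc eq_neg_iff_add_eq_0)
  then have "P *v x = x"
    using \<open>P ** P = P\<close>
    by (metis diff_0 matrix_vector_mul_assoc matrix_vector_mult_diff_distrib
        matrix_vector_mult_0_right)
  then have "x \<bullet> (G *v x) = x \<bullet> (P *v (G *v x))"
    using \<open>transpose P = P\<close> inner_transpose by metis
  also have "\<dots> = - (x \<bullet> x)"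
    using x by (metis inner_minus_right minus_minus)
  finally have "x \<bullet> x \<le> 0" using G_psd[of x] by linarith
  then show "x = 0" by (metis inner_eq_zero_iff inner_ge_zero order_antisym)
qed

lemma diag_mat_mult: "diag_mat f ** diag_mat g = diag_mat (\<lambda>i. f i * g i)"
  unfolding diag_mat_def matrix_matrix_mult_def vec_eq_iff
  by (simp add: if_distrib[of "\<lambda>x. x * _"] sum.delta' cong del: if_weak_cong)

lemma diag_mat_1: "diag_mat (\<lambda>i. 1) = mat 1"
  by (simp add: diag_mat_def mat_def)

lemma transpose_diag_mat: "transpose (diag_mat f) = diag_mat f"
  by (simp add: diag_mat_def transpose_def vec_eq_iff)

lemma inner_diag_mat: "u \<bullet> (diag_mat f *v u) = (\<Sum>i\<in>UNIV. f i * (u $ i)\<^sup>2)"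
  unfolding diag_mat_def matrix_vector_mult_def inner_vec_def
  by (simp add: if_distrib[of "\<lambda>x. _ * x"] sum.delta power2_eq_square algebra_simps
      cong del: if_weak_cong)

lemma inner_diag_mat_nonneg: "(\<And>i. f i \<ge> 0) \<Longrightarrow> u \<bullet> (diag_mat f *v u) \<ge> 0"
  unfolding inner_diag_mat by (intro sum_nonneg) simp

lemma inner_diag_mat_pos:
  assumes "\<And>i. f i > 0" and "u \<noteq> 0"
  shows "u \<bullet> (diag_mat f *v u) > 0"
proof -
  obtain i where "u $ i \<noteq> 0" using \<open>u \<noteq> 0\<close> by (auto simp: vec_eq_iff)
  then have "f i * (u $ i)\<^sup>2 > 0" using assms(1) by simp
  then show ?thesis
    unfolding inner_diag_mat using assms(1)
    by (metis (no_types, lifting) finite UNIV_I less_eq_real_def mult_nonneg_nonneg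
        sum_pos2 zero_le_power2)
qed

lemma inner_congruence_diag_mat_nonneg:
  assumes "\<And>j. f j \<ge> 0"
  shows "x \<bullet> ((B ** diag_mat f ** transpose B) *v x) \<ge> 0"
proof -
  have "x \<bullet> ((B ** diag_mat f ** transpose B) *v x)
      = (transpose B *v x) \<bullet> (diag_mat f *v (transpose B *v x))"
    by (simp only: inner_transpose flip: matrix_vector_mul_assoc)
  also have "\<dots> \<ge> 0" by (rule inner_diag_mat_nonneg[OF assms])
  finally show ?thesis .
qed

definition hat_mat :: "real^'p^'n \<Rightarrow> real^'n^'n" where
  "hat_mat A = A ** matrix_inv (transpose A ** A) ** transpose A"

lemma transpose_hat_mat:
  assumes "invertible (transpose A ** A)"
  shows "transpose (hat_mat A) = hat_mat A"
  using assms
  by (simp add: hat_mat_def matrix_transpose_mul transpose_matrix_inv matrix_mul_assoc)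

lemma transpose_mult_hat_mat:
  assumes "invertible (transpose A ** A)"
  shows "transpose A ** hat_mat A = transpose A"
  by (simp add: hat_mat_def matrix_mul_assoc matrix_inv_right[OF assms])

lemma hat_mat_idem:
  assumes "invertible (transpose A ** A)"
  shows "hat_mat A ** hat_mat A = hat_mat A"
  by (metis assms hat_mat_def matrix_mul_assoc transpose_mult_hat_mat)

lemma id_minus_hat_mat_idem:
  assumes "invertible (transpose A ** A)"
  shows "(mat 1 - hat_mat A) ** (mat 1 - hat_mat A) = mat 1 - hat_mat A"
  using hat_mat_idem[OF assms] by (simp add: matrix_diff_ldistrib matrix_diff_rdistrib)

definition vcat :: "real^'m^'k \<Rightarrow> real^'m^'l \<Rightarrow> real^'m^('k + 'l)" where
  "vcat A B = (\<chi> i. case i of Inl a \<Rightarrow> A $ a | Inr b \<Rightarrow> B $ b)"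

lemma sum_UNIV_sum_type:
  "(\<Sum>j\<in>(UNIV::('a::finite + 'b::finite) set). f j)
     = (\<Sum>a\<in>UNIV. f (Inl a)) + (\<Sum>b\<in>UNIV. f (Inr b))"
  by (subst UNIV_Plus_UNIV[symmetric], subst sum.Plus) (simp_all add: comp_def)

lemma transpose_hcat: "transpose (hcat A B) = vcat (transpose A) (transpose B)"
  by (auto simp: vec_eq_iff transpose_def hcat_def vcat_def split: sum.split)

lemma vcat_add: "vcat A B + vcat C D = vcat (A + C) (B + D)"
  by (auto simp: vec_eq_iff vcat_def split: sum.split)

lemma hcat_mult_vcat: "hcat A B ** vcat C D = A ** C + B ** D"
  by (simp add: vec_eq_iff matrix_matrix_mult_def hcat_def vcat_def sum_UNIV_sum_type)

lemma vcat_mult: "vcat A B ** C = vcat (A ** C) (B ** C)"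
  by (auto simp: vec_eq_iff matrix_matrix_mult_def vcat_def split: sum.split)

lemma bdiag_mult_vcat: "bdiag A B ** vcat C D = vcat (A ** C) (B ** D)"
  by (auto simp: vec_eq_iff matrix_matrix_mult_def bdiag_def vcat_def sum_UNIV_sum_type
      split: sum.split)

lemma matrix_mult_hcat: "C ** hcat A B = hcat (C ** A) (C ** B)"
  by (auto simp: vec_eq_iff matrix_matrix_mult_def hcat_def split: sum.split)

lemma hcat_mult_vector:
  "hcat A B *v v = A *v (\<chi> a. v $ Inl a) + B *v (\<chi> b. v $ Inr b)"
  by (simp add: vec_eq_iff matrix_vector_mult_def hcat_def sum_UNIV_sum_type)

lemma inner_bdiag:
  "v \<bullet> (bdiag A B *v v)
     = (\<chi> a. v $ Inl a) \<bullet> (A *v (\<chi> a. v $ Inl a))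
       + (\<chi> b. v $ Inr b) \<bullet> (B *v (\<chi> b. v $ Inr b))"
  by (simp add: inner_vec_def matrix_vector_mult_def bdiag_def sum_UNIV_sum_type)

lemma vec_sum_type_eq_0:
  fixes v :: "real^('k::finite + 'l::finite)"
  shows "v = 0 \<longleftrightarrow> (\<chi> a. v $ Inl a) = 0 \<and> (\<chi> b. v $ Inr b) = 0"
  by (auto simp: vec_eq_iff) (metis sum.exhaust)

lemma invertible_ridge_Gram:
  fixes A :: "real^'p1^'n" and B :: "real^'p2^'n"
  assumes A_inj: "inj ((*v) A)" and l_pos: "\<And>j. l j > 0"
  shows "invertible (transpose (hcat A B) ** hcat A B + bdiag (mat 0) (diag_mat l))"
proof (rule invertible_if_pos_def)
  fix v :: "real^('p1 + 'p2)"
  assume "v \<noteq> 0"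
  define v1 where "v1 = (\<chi> a. v $ Inl a)"
  define v2 where "v2 = (\<chi> b. v $ Inr b)"
  have quad: "v \<bullet> ((transpose (hcat A B) ** hcat A B + bdiag (mat 0) (diag_mat l)) *v v)
      = (hcat A B *v v) \<bullet> (hcat A B *v v) + v2 \<bullet> (diag_mat l *v v2)"
    by (simp add: matrix_vector_mult_add_rdistrib inner_add_right inner_Gram inner_bdiag
        v2_def)
  show "v \<bullet> ((transpose (hcat A B) ** hcat A B + bdiag (mat 0) (diag_mat l)) *v v) > 0"
  proof (cases "v2 = 0")
    case True
    then have "v1 \<noteq> 0"
      using \<open>v \<noteq> 0\<close> vec_sum_type_eq_0[of v] unfolding v1_def v2_def by simp
    then have "A *v v1 \<noteq> 0" using A_inj by (metis injD matrix_vector_mult_0_right)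
    moreover have "hcat A B *v v = A *v v1"
      using True by (simp add: hcat_mult_vector v1_def v2_def)
    ultimately show ?thesis unfolding quad using True by simp
  next
    case False
    then have "v2 \<bullet> (diag_mat l *v v2) > 0" by (rule inner_diag_mat_pos[OF l_pos])
    then show ?thesis unfolding quad by (metis add_nonneg_pos inner_ge_zero)
  qed
qed

lemma ridge_hat_mat_eq_if_invertible:
  fixes A :: "real^'p1^'n" and B :: "real^'p2^'n" and L Li :: "real^'p2^'p2"
  defines "X \<equiv> hcat A B" and "P \<equiv> mat 1 - hat_mat A" and "G \<equiv> B ** Li ** transpose B"
  defines "M \<equiv> transpose X ** X + bdiag (mat 0) L"
    and "Y \<equiv> G ** matrix_inv (mat 1 + P ** G) ** P"
  assumes L_Li: "L ** Li = mat 1" and C_inv: "invertible (transpose A ** A)"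
    and M_inv: "invertible M" and PG_inv: "invertible (mat 1 + P ** G)"
  shows "X ** matrix_inv M ** transpose X = hat_mat A ** (mat 1 - Y) + Y"
proof -
  define H where "H = hat_mat A ** (mat 1 - Y) + Y"
  define Z1 where "Z1 = matrix_inv (transpose A ** A) ** transpose A ** (mat 1 - Y)"
  define Z2 where "Z2 = Li ** transpose B ** P ** (mat 1 - Y)"
  have "B ** Z2 = G ** P - G ** (P ** G ** matrix_inv (mat 1 + P ** G)) ** P"
    by (simp add: Z2_def G_def Y_def matrix_diff_ldistrib matrix_mul_assoc)
  also have "\<dots> = G ** (mat 1 - P ** G ** matrix_inv (mat 1 + P ** G)) ** P"
    by (simp add: matrix_diff_ldistrib matrix_diff_rdistrib matrix_mul_assoc)
  also have "\<dots> = Y"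
    by (simp add: mat_1_minus_mult_inv[OF PG_inv] Y_def)
  finally have "A ** Z1 + B ** Z2 = H"
    by (simp add: H_def Z1_def hat_mat_def matrix_mul_assoc)
  then have XZ: "X ** vcat Z1 Z2 = H"
    by (simp add: X_def hcat_mult_vcat)
  have AH: "transpose A ** H = transpose A"
    by (simp add: H_def matrix_add_ldistrib matrix_diff_ldistrib matrix_mul_assoc
        transpose_mult_hat_mat[OF C_inv])
  have BH: "transpose B ** H + L ** Z2 = transpose B"
  proof -
    have "L ** Z2 = transpose B ** P ** (mat 1 - Y)"
      by (simp add: Z2_def matrix_mul_assoc L_Li)
    then have "transpose B ** H + L ** Z2
        = transpose B ** ((hat_mat A + P) ** (mat 1 - Y) + Y)"
      by (simp add: H_def matrix_add_ldistrib matrix_add_rdistrib matrix_mul_assoc)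
    also have "\<dots> = transpose B" by (simp add: P_def matrix_diff_ldistrib)
    finally show ?thesis .
  qed
  have "M ** vcat Z1 Z2 = transpose X"
  proof -
    have "M ** vcat Z1 Z2 = transpose X ** (X ** vcat Z1 Z2) + bdiag (mat 0) L ** vcat Z1 Z2"
      by (simp only: M_def matrix_add_rdistrib matrix_mul_assoc)
    also have "\<dots> = vcat (transpose A ** H) (transpose B ** H + L ** Z2)"
      unfolding XZ by (simp add: X_def transpose_hcat vcat_mult bdiag_mult_vcat vcat_add)
    finally show ?thesis by (simp add: AH BH X_def transpose_hcat)
  qed
  then have "vcat Z1 Z2 = matrix_inv M ** transpose X"
    by (metis M_inv matrix_inv_left matrix_mul_assoc matrix_mul_lid)
  then show ?thesis using XZ by (simp add: H_def matrix_mul_assoc)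
qed

lemma ridge_hat_mat_decomposition:
  fixes A :: "real^'p1^'n" and B :: "real^'p2^'n" and l :: "'p2 \<Rightarrow> real"
  assumes A_inj: "inj ((*v) A)" and l_pos: "\<And>j. l j > 0"
  defines "P \<equiv> mat 1 - hat_mat A" and "G \<equiv> B ** diag_mat (\<lambda>j. 1 / l j) ** transpose B"
  defines "Y \<equiv> G ** (mat 1 - matrix_inv (mat 1 + P ** G) ** P ** G) ** P"
  shows "hcat A B ** matrix_inv (transpose (hcat A B) ** hcat A B + bdiag (mat 0) (diag_mat l))
           ** transpose (hcat A B) = hat_mat A ** (mat 1 - Y) + Y"
proof -
  have C_inv: "invertible (transpose A ** A)" using A_inj by (rule invertible_Gram)
  have "transpose P = P" and "P ** P = P"
    using C_inv by (simp_all add: P_def transpose_diff transpose_hat_mat id_minus_hat_mat_idem)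
  moreover have "x \<bullet> (G *v x) \<ge> 0" for x
    unfolding G_def using l_pos
    by (intro inner_congruence_diag_mat_nonneg) (simp add: less_imp_le)
  ultimately have PG_inv: "invertible (mat 1 + P ** G)"
    by (rule invertible_id_plus_proj_mult_psd)
  have L_Li: "diag_mat l ** diag_mat (\<lambda>j. 1 / l j) = mat 1"
    using l_pos by (simp add: diag_mat_mult diag_mat_1 less_imp_neq[THEN not_sym])
  have Y_eq: "Y = G ** matrix_inv (mat 1 + P ** G) ** P"
    by (simp add: Y_def mat_1_minus_inv_mult[OF PG_inv] flip: matrix_mul_assoc)
  show ?thesis
    unfolding Y_eq P_def G_def
    by (rule ridge_hat_mat_eq_if_invertible[OF L_Li C_inv invertible_ridge_Gram[OF A_inj l_pos]
          PG_inv[unfolded P_def G_def]])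
qed

lemma sum_scaleR_Sigma_blk:
  fixes X2 :: "real^'p^'n" and blk :: "'p \<Rightarrow> 'b::finite"
  shows "(\<Sum>b\<in>UNIV. c b *\<^sub>R Sigma_blk X2 blk b)
           = X2 ** diag_mat (\<lambda>j. c (blk j)) ** transpose X2"
proof -
  have "(\<Sum>b\<in>UNIV. c b *\<^sub>R Sigma_blk X2 blk b) $ i $ k
      = (\<Sum>b\<in>UNIV. \<Sum>j\<in>{j\<in>UNIV. blk j = b}. c (blk j) * (X2 $ i $ j * X2 $ k $ j))"
    for i k
    by (simp add: Sigma_blk_def sum_distrib_left)
  also have "\<dots> i k = (\<Sum>j\<in>UNIV. c (blk j) * (X2 $ i $ j * X2 $ k $ j))" for i k
    by (rule sum.group) auto
  also have "\<dots> i k = (X2 ** diag_mat (\<lambda>j. c (blk j)) ** transpose X2) $ i $ k" for i k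
    unfolding matrix_matrix_mult_def diag_mat_def transpose_def
    by (simp add: if_distrib[of "\<lambda>x. _ * x"] sum.delta' algebra_simps
        cong del: if_weak_cong)
  finally show ?thesis by (simp add: vec_eq_iff)
qed

lemma diag_sqrt_mult_self:
  assumes "is_diag W" and "\<And>i. W $ i $ i \<ge> 0"
  shows "diag_sqrt W ** diag_sqrt W = W"
proof -
  have "diag_sqrt W ** diag_sqrt W = diag_mat (\<lambda>i. W $ i $ i)"
    using assms(2) by (simp add: diag_sqrt_def diag_mat_mult)
  also have "\<dots> = W"
    using assms(1) by (auto simp: diag_mat_def is_diag_def vec_eq_iff)
  finally show ?thesis .
qed

lemma invertible_diag_sqrt:
  assumes "\<And>i. W $ i $ i > 0"
  shows "invertible (diag_sqrt W)"
proof -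
  have "diag_mat (\<lambda>i. 1 / sqrt (W $ i $ i)) ** diag_sqrt W = mat 1"
    using assms
    by (simp add: diag_sqrt_def diag_mat_mult diag_mat_1 less_imp_neq[THEN not_sym])
  then show ?thesis using invertible_left_inverse by blast
qed

lemma transpose_diag_sqrt: "transpose (diag_sqrt W) = diag_sqrt W"
  by (simp add: diag_sqrt_def transpose_diag_mat)

lemma transpose_diag_msqrt:
  assumes "\<And>i. W $ i $ i > 0"
  shows "transpose (diag_msqrt W) = diag_msqrt W"
  by (simp add: diag_msqrt_def transpose_matrix_inv invertible_diag_sqrt assms
      transpose_diag_sqrt)

lemma diag_sqrt_conj_diag_msqrt_conj:
  assumes "\<And>i. W $ i $ i > 0"
  shows "diag_sqrt W ** (diag_msqrt W ** Y ** diag_msqrt W) ** diag_sqrt W = Y"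
proof -
  have D_inv: "invertible (diag_sqrt W)" using assms by (rule invertible_diag_sqrt)
  have "diag_sqrt W ** (diag_msqrt W ** Y ** diag_msqrt W) ** diag_sqrt W
      = (diag_sqrt W ** diag_msqrt W) ** Y ** (diag_msqrt W ** diag_sqrt W)"
    by (simp only: matrix_mul_assoc)
  also have "\<dots> = Y"
    by (simp add: diag_msqrt_def matrix_inv_left[OF D_inv] matrix_inv_right[OF D_inv])
  finally show ?thesis .
qed

lemma P1W_eq: "P1W X1 W = mat 1 - hat_mat (diag_sqrt W ** X1)"
  by (simp add: P1W_def Let_def hat_mat_def)

lemma GammaW_eq:
  "GammaW X2 blk lam W
     = (diag_sqrt W ** X2) ** diag_mat (\<lambda>j. 1 / lam (blk j)) ** transpose (diag_sqrt W ** X2)"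
  by (simp add: GammaW_def sum_scaleR_Sigma_blk matrix_transpose_mul transpose_diag_sqrt
      matrix_mul_assoc)

lemma HW_eq_weighted_design:
  fixes X1 :: "real^'p1^'n" and X2 :: "real^'p2^'n"
  assumes W_diag: "is_diag W" and W_pos: "\<And>i. W $ i $ i > 0"
  defines "XW \<equiv> hcat (diag_sqrt W ** X1) (diag_sqrt W ** X2)"
  shows "HW X1 X2 blk lam W = diag_msqrt W
           ** (XW ** matrix_inv (transpose XW ** XW + bdiag (mat 0) (diag_mat (\<lambda>j. lam (blk j))))
                 ** transpose XW) ** diag_msqrt W"
proof -
  have D_inv: "invertible (diag_sqrt W)" using W_pos by (rule invertible_diag_sqrt)
  have X: "hcat X1 X2 = diag_msqrt W ** XW"
    by (simp add: XW_def matrix_mult_hcat diag_msqrt_def matrix_mul_assoc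
        matrix_inv_left[OF D_inv])
  have "diag_msqrt W ** W ** diag_msqrt W
      = diag_msqrt W ** (diag_sqrt W ** diag_sqrt W) ** diag_msqrt W"
    using W_pos by (simp add: diag_sqrt_mult_self[OF W_diag] less_imp_le)
  also have "\<dots> = (diag_msqrt W ** diag_sqrt W) ** (diag_sqrt W ** diag_msqrt W)"
    by (simp only: matrix_mul_assoc)
  also have "\<dots> = mat 1"
    by (simp add: diag_msqrt_def matrix_inv_left[OF D_inv] matrix_inv_right[OF D_inv])
  finally have DWD: "diag_msqrt W ** W ** diag_msqrt W = mat 1" .
  have "transpose (hcat X1 X2) ** W ** hcat X1 X2
      = transpose XW ** (diag_msqrt W ** W ** diag_msqrt W) ** XW"
    using W_pos by (simp add: X matrix_transpose_mul transpose_diag_msqrt matrix_mul_assoc)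
  then have "transpose (hcat X1 X2) ** W ** hcat X1 X2 = transpose XW ** XW"
    by (simp add: DWD)
  then show ?thesis
    using W_pos
    by (simp add: HW_def Let_def X matrix_transpose_mul transpose_diag_msqrt matrix_mul_assoc)
qed

theorem proposition1:
  fixes X1 :: "real^'p1^'n" and X2 :: "real^'p2^'n"
    and blk :: "'p2 \<Rightarrow> 'b::finite" and lam :: "'b \<Rightarrow> real"
    and W :: "real^'n^'n"
  assumes rankX1: "rank X1 = CARD('p1)"
    and lam_pos: "\<forall>b. lam b > 0"
    and W_diag: "is_diag W" and W_pos: "\<forall>i. W $ i $ i > 0"
  shows "HW X1 X2 blk lam W =
           diag_msqrt W ** (diag_sqrt W ** X1)
             ** matrix_inv (transpose (diag_sqrt W ** X1) ** (diag_sqrt W ** X1))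
             ** transpose (diag_sqrt W ** X1)
             ** (mat 1 - diag_sqrt W ** H2W X1 X2 blk lam W ** diag_sqrt W) ** diag_msqrt W
           + H2W X1 X2 blk lam W"
proof -
  define A where "A = diag_sqrt W ** X1"
  define B where "B = diag_sqrt W ** X2"
  define P where "P = mat 1 - hat_mat A"
  define G where "G = B ** diag_mat (\<lambda>j. 1 / lam (blk j)) ** transpose B"
  define Y where "Y = G ** (mat 1 - matrix_inv (mat 1 + P ** G) ** P ** G) ** P"
  have D_inv: "invertible (diag_sqrt W)" using W_pos by (simp add: invertible_diag_sqrt)
  have A_inj: "inj ((*v) A)"
    unfolding A_def using D_inv rankX1 by (simp add: inj_matrix_mult_left full_rank_injective)
  have lam_blk_pos: "\<And>j. lam (blk j) > 0" and W_pos': "\<And>i. W $ i $ i > 0"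
    using lam_pos W_pos by simp_all
  have HW: "HW X1 X2 blk lam W = diag_msqrt W ** (hat_mat A ** (mat 1 - Y) + Y) ** diag_msqrt W"
    unfolding HW_eq_weighted_design[where ?X1.0 = X1 and ?X2.0 = X2, OF W_diag W_pos',
        folded A_def B_def] Y_def P_def G_def
    by (simp only: ridge_hat_mat_decomposition[OF A_inj lam_blk_pos])
  have H2: "H2W X1 X2 blk lam W = diag_msqrt W ** Y ** diag_msqrt W"
    by (simp add: H2W_def Let_def P1W_eq GammaW_eq Y_def P_def G_def A_def B_def
        matrix_mul_assoc)
  show ?thesis
    unfolding H2 diag_sqrt_conj_diag_msqrt_conj[OF W_pos'] HW A_def[symmetric]
    by (simp add: hat_mat_def matrix_add_ldistrib matrix_add_rdistrib matrix_mul_assoc)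
qed

end
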